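(* Let $\mathbb T=\mathbb R/\mathbb Z$, $Tx=2x \bmod 1$, $\mu$ Haar measure, and $d(x,y)=\min_{k\in\mathbb Z}|x-y-k|$. For $m\ge1$ let $A_m(x_1,x_2)=\frac1m\sum_{t=0}^{m-1}d(T^tx_1,T^tx_2)$. Let $\lambda_\Delta=(x\mapsto(x,x))_\#\mu$, and let $Q_m^\Delta$ and $Q_m^\otimes$ be the laws on $[0,1/2]^2$ of $(A_m(x_1,x_2),A_m(y_1,y_2))$ when $((x_1,y_1),(x_2,y_2))$ is sampled from $\lambda_\Delta^{\otimes2}$, respectively from $(\mu\otimes\mu)^{\otimes2}$. Then, with $W_1$ for the Euclidean metric on $[0,1/2]^2$, \[\frac{1}{24\sqrt2\,m}\le W_1(Q_m^\Delta,Q_m^\otimes)\le\frac{1}{\sqrt{24m}}.\] Consequently, for the full unanchored array laws with the coordinate Euclidean array metric, \[W_1\bigl(\Phi_{2,m}(\lambda_\Delta),\Phi_{2,m}(\mu\otimes\mu)\bigr)\ge\frac{1}{24\sqrt{2m}}.\]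
   Context: For $z_i=(x_i,y_i)\in\mathbb T\times\mathbb T$, $\mathcal D^X_{n,m}=(d(T^ax_i,T^bx_j))_{1\le i,j\le n,0\le a,b<m}$, $\mathcal D^Y_{n,m}=(d(T^ay_i,T^by_j))_{1\le i,j\le n,0\le a,b<m}$, and for a Borel probability measure $\lambda$ on $\mathbb T\times\mathbb T$, $\Phi_{n,m}(\lambda)=\mathrm{Law}_{\lambda^{\otimes n}}(\mathcal D^X_{n,m},\mathcal D^Y_{n,m})$. $W_1$ is the 1-Wasserstein distance. *)

theory Defs
  imports "HOL-Probability.Probability"
begin

text \<open>The circle T = R/Z is represented by representatives in [0,1);
  Haar measure is the uniform (Lebesgue) probability measure on [0,1).\<close>

definition haar :: "real measure" where
  "haar = uniform_measure lborel {0..<1}"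

definition doubling :: "real \<Rightarrow> real" where
  "doubling x = frac (2 * x)"

definition circ_dist :: "real \<Rightarrow> real \<Rightarrow> real" where
  "circ_dist x y = (INF k::int. \<bar>x - y - of_int k\<bar>)"

definition avg_dist :: "nat \<Rightarrow> real \<Rightarrow> real \<Rightarrow> real" where
  "avg_dist m x1 x2 = (1 / real m) * (\<Sum>t<m. circ_dist ((doubling ^^ t) x1) ((doubling ^^ t) x2))"

definition diag_meas :: "(real \<times> real) measure" where
  "diag_meas = distr haar borel (\<lambda>x. (x, x))"

definition Q_law :: "nat \<Rightarrow> (real \<times> real) measure \<Rightarrow> (real \<times> real) measure" where
  "Q_law m lam = distr (lam \<Otimes>\<^sub>M lam) borel
     (\<lambda>((x1, y1), (x2, y2)). (avg_dist m x1 x2, avg_dist m y1 y2))"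

definition couplings :: "'a measure \<Rightarrow> 'a measure \<Rightarrow> ('a \<times> 'a) measure set" where
  "couplings P Q = {\<pi>. sets \<pi> = sets (P \<Otimes>\<^sub>M Q) \<and> prob_space \<pi> \<and>
      distr \<pi> P fst = P \<and> distr \<pi> Q snd = Q}"

definition W1 :: "('a \<Rightarrow> 'a \<Rightarrow> real) \<Rightarrow> 'a measure \<Rightarrow> 'a measure \<Rightarrow> ennreal" where
  "W1 c P Q = (INF \<pi>\<in>couplings P Q. \<integral>\<^sup>+ z. ennreal (c (fst z) (snd z)) \<partial>\<pi>)"

type_synonym array = "nat \<times> nat \<times> nat \<times> nat \<Rightarrow> real"

definition arr_idx :: "nat \<Rightarrow> nat \<Rightarrow> (nat \<times> nat \<times> nat \<times> nat) set" where
  "arr_idx n m = {1..n} \<times> {1..n} \<times> {..<m} \<times> {..<m}"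

definition dist_array :: "nat \<Rightarrow> nat \<Rightarrow> ((real \<times> real) \<Rightarrow> real) \<Rightarrow> (nat \<Rightarrow> real \<times> real) \<Rightarrow> array" where
  "dist_array n m pr z = restrict
     (\<lambda>(i, j, a, b). circ_dist ((doubling ^^ a) (pr (z i))) ((doubling ^^ b) (pr (z j))))
     (arr_idx n m)"

definition Phi :: "nat \<Rightarrow> nat \<Rightarrow> (real \<times> real) measure \<Rightarrow> (array \<times> array) measure" where
  "Phi n m lam = distr (PiM {1..n} (\<lambda>_. lam))
     (PiM (arr_idx n m) (\<lambda>_. borel) \<Otimes>\<^sub>M PiM (arr_idx n m) (\<lambda>_. borel))
     (\<lambda>z. (dist_array n m fst z, dist_array n m snd z))"

definition array_metric :: "nat \<Rightarrow> nat \<Rightarrow> array \<times> array \<Rightarrow> array \<times> array \<Rightarrow> real" where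
  "array_metric n m D E = sqrt (\<Sum>\<iota>\<in>arr_idx n m.
      (fst D \<iota> - fst E \<iota>)\<^sup>2 + (snd D \<iota> - snd E \<iota>)\<^sup>2)"

end

theory Submission
  imports Defs
begin

(* Write int_dist u for the distance from u to the nearest integer. Since T^t x = 2^t x mod 1,
   A_m(x1, x2) = (1/m) * sum_{t<m} int_dist (2^t (x1 - x2)). For fixed x1 and Haar-distributed x2
   the summands have mean 1/4 and variance 1/48 and are pairwise uncorrelated: translating by
   2^-(s+1) turns int_dist (2^s u) into 1/2 - int_dist (2^s u) and leaves int_dist (2^t u), t > s,
   unchanged. So A_m(x1, .) has mean 1/4 and variance 1/(48 m), and the difference
   D = A_m(x1, x2) - A_m(y1, y2) under the product law satisfies E D^2 = 1/(24 m); as |D| <= 1/2,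
   1/(12 m) <= E|D| <= 1/sqrt(24 m).
   Q_m of the diagonal measure lives on the diagonal, which is at distance at least |b - c|/sqrt 2
   from (b, c); this gives the lower bound, and coupling (A, A) with (A, A') the upper bound.
   Averaging the entries (1,2,t,t) of a distance array maps Phi_{2,m}(lambda) to Q_m(lambda)
   and shrinks the array metric by the factor sqrt m, which transfers the lower bound to the arrays. *)

section \<open>Couplings and the Wasserstein distance\<close>

lemma W1_le_nn_integral_distr:
  assumes "prob_space M" and F [measurable]: "F \<in> measurable M (P \<Otimes>\<^sub>M Q)"
    and marginals: "distr M P (fst \<circ> F) = P" "distr M Q (snd \<circ> F) = Q"
    and c [measurable]: "case_prod c \<in> borel_measurable (P \<Otimes>\<^sub>M Q)"
  shows "W1 c P Q \<le> (\<integral>\<^sup>+ w. ennreal (c (fst (F w)) (snd (F w))) \<partial>M)"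
proof -
  let ?\<pi> = "distr M (P \<Otimes>\<^sub>M Q) F"
  have "?\<pi> \<in> couplings P Q"
    unfolding couplings_def
  proof (intro CollectI conjI)
    show "sets ?\<pi> = sets (P \<Otimes>\<^sub>M Q)"
      by simp
    show "prob_space ?\<pi>"
      by (rule prob_space.prob_space_distr[OF assms(1) F])
    show "distr ?\<pi> P fst = P" "distr ?\<pi> Q snd = Q"
      using marginals by (simp_all add: distr_distr)
  qed
  then have "W1 c P Q \<le> (\<integral>\<^sup>+ z. ennreal (c (fst z) (snd z)) \<partial>?\<pi>)"
    unfolding W1_def by (rule INF_lower)
  also have "\<dots> = (\<integral>\<^sup>+ w. ennreal (c (fst (F w)) (snd (F w))) \<partial>M)"
    by (rule nn_integral_distr) (simp_all add: case_prod_beta')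
  finally show ?thesis .
qed

lemma nn_integral_le_W1:
  assumes supp: "AE x in P. S x" "{x \<in> space P. S x} \<in> sets P"
    and g [measurable]: "g \<in> borel_measurable Q"
    and bound: "\<And>x y. S x \<Longrightarrow> g y \<le> ennreal (c x y)"
  shows "(\<integral>\<^sup>+ y. g y \<partial>Q) \<le> W1 c P Q"
  unfolding W1_def
proof (rule INF_greatest)
  fix \<pi> assume "\<pi> \<in> couplings P Q"
  then have sets: "sets \<pi> = sets (P \<Otimes>\<^sub>M Q)" and marginals: "distr \<pi> P fst = P" "distr \<pi> Q snd = Q"
    by (simp_all add: couplings_def)
  have fst: "fst \<in> measurable \<pi> P" and snd: "snd \<in> measurable \<pi> Q"
    by (simp_all add: measurable_cong_sets[OF sets refl])
  have "AE x in distr \<pi> P fst. S x"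
    unfolding marginals by (rule supp(1))
  then have "AE z in \<pi>. S (fst z)"
    by (subst (asm) AE_distr_iff[OF fst]) (simp_all add: marginals supp(2))
  then have "AE z in \<pi>. g (snd z) \<le> ennreal (c (fst z) (snd z))"
    by eventually_elim (rule bound)
  then have "(\<integral>\<^sup>+ z. g (snd z) \<partial>\<pi>) \<le> (\<integral>\<^sup>+ z. ennreal (c (fst z) (snd z)) \<partial>\<pi>)"
    by (rule nn_integral_mono_AE)
  moreover have "(\<integral>\<^sup>+ z. g (snd z) \<partial>\<pi>) = (\<integral>\<^sup>+ y. g y \<partial>distr \<pi> Q snd)"
    by (rule nn_integral_distr[symmetric, OF snd]) (simp add: marginals)
  ultimately show "(\<integral>\<^sup>+ y. g y \<partial>Q) \<le> (\<integral>\<^sup>+ z. ennreal (c (fst z) (snd z)) \<partial>\<pi>)"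
    by (simp add: marginals)
qed

lemma W1_distr_le_nn_integral:
  assumes coupling: "\<pi> \<in> couplings P Q"
    and f [measurable]: "f \<in> measurable P N" "f \<in> measurable Q N"
    and c' [measurable]: "case_prod c' \<in> borel_measurable (N \<Otimes>\<^sub>M N)"
  shows "W1 c' (distr P N f) (distr Q N f) \<le> (\<integral>\<^sup>+ z. ennreal (c' (f (fst z)) (f (snd z))) \<partial>\<pi>)"
proof -
  have sets: "sets \<pi> = sets (P \<Otimes>\<^sub>M Q)" and prob: "prob_space \<pi>"
    and marginals: "distr \<pi> P fst = P" "distr \<pi> Q snd = Q"
    using coupling by (simp_all add: couplings_def)
  have fst [measurable]: "fst \<in> measurable \<pi> P" and snd [measurable]: "snd \<in> measurable \<pi> Q"
    by (simp_all add: measurable_cong_sets[OF sets refl])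
  have "W1 c' (distr P N f) (distr Q N f)
      \<le> (\<integral>\<^sup>+ z. ennreal (c' (fst (map_prod f f z)) (snd (map_prod f f z))) \<partial>\<pi>)"
  proof (rule W1_le_nn_integral_distr[OF prob])
    show "map_prod f f \<in> measurable \<pi> (distr P N f \<Otimes>\<^sub>M distr Q N f)"
      by (simp add: measurable_cong_sets[OF refl sets_pair_measure_cong[OF sets_distr sets_distr]]
          map_prod_def case_prod_unfold)
    have "distr \<pi> (distr P N f) (fst \<circ> map_prod f f) = distr \<pi> N (f \<circ> fst)"
      by (rule distr_cong) auto
    also have "\<dots> = distr P N f"
      using distr_distr[OF f(1) fst] by (simp add: marginals)
    finally show "distr \<pi> (distr P N f) (fst \<circ> map_prod f f) = distr P N f" .
    have "distr \<pi> (distr Q N f) (snd \<circ> map_prod f f) = distr \<pi> N (f \<circ> snd)"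
      by (rule distr_cong) auto
    also have "\<dots> = distr Q N f"
      using distr_distr[OF f(2) snd] by (simp add: marginals)
    finally show "distr \<pi> (distr Q N f) (snd \<circ> map_prod f f) = distr Q N f" .
    show "case_prod c' \<in> borel_measurable (distr P N f \<Otimes>\<^sub>M distr Q N f)"
      by (simp add: measurable_cong_sets[OF sets_pair_measure_cong[OF sets_distr sets_distr] refl])
  qed
  then show ?thesis
    by simp
qed

lemma W1_distr_le:
  assumes f [measurable]: "f \<in> measurable P N" "f \<in> measurable Q N"
    and c' [measurable]: "case_prod c' \<in> borel_measurable (N \<Otimes>\<^sub>M N)"
    and lipschitz: "0 \<le> L" "\<And>x y. L * c' (f x) (f y) \<le> c x y"
  shows "ennreal L * W1 c' (distr P N f) (distr Q N f) \<le> W1 c P Q"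
  unfolding W1_def[of c P Q]
proof (rule INF_greatest)
  fix \<pi> assume coupling: "\<pi> \<in> couplings P Q"
  then have [measurable]: "fst \<in> measurable \<pi> P" "snd \<in> measurable \<pi> Q"
    by (simp_all add: couplings_def measurable_cong_sets[of \<pi> "P \<Otimes>\<^sub>M Q", OF _ refl])
  have "ennreal L * W1 c' (distr P N f) (distr Q N f)
      \<le> ennreal L * (\<integral>\<^sup>+ z. ennreal (c' (f (fst z)) (f (snd z))) \<partial>\<pi>)"
    using W1_distr_le_nn_integral[OF coupling f c'] by (rule mult_left_mono) simp
  also have "\<dots> = (\<integral>\<^sup>+ z. ennreal (L * c' (f (fst z)) (f (snd z))) \<partial>\<pi>)"
    using lipschitz(1) by (simp add: nn_integral_cmult ennreal_mult')
  also have "\<dots> \<le> (\<integral>\<^sup>+ z. ennreal (c (fst z) (snd z)) \<partial>\<pi>)"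
    by (intro nn_integral_mono ennreal_leI lipschitz(2))
  finally show "ennreal L * W1 c' (distr P N f) (distr Q N f) \<le> (\<integral>\<^sup>+ z. ennreal (c (fst z) (snd z)) \<partial>\<pi>)" .
qed

lemma dist_diagonal_ge:
  fixes a b c :: real
  shows "\<bar>b - c\<bar> / sqrt 2 \<le> dist (a, a) (b, c)"
proof -
  have "2 * ((a - b)\<^sup>2 + (a - c)\<^sup>2) = (b - c)\<^sup>2 + (2 * a - b - c)\<^sup>2"
    by (simp add: power2_eq_square algebra_simps)
  then have "(b - c)\<^sup>2 \<le> 2 * ((a - b)\<^sup>2 + (a - c)\<^sup>2)"
    using zero_le_power2[of "2 * a - b - c"] by linarith
  then have "(b - c)\<^sup>2 / 2 \<le> (a - b)\<^sup>2 + (a - c)\<^sup>2"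
    by simp
  then have "sqrt ((b - c)\<^sup>2 / 2) \<le> sqrt ((a - b)\<^sup>2 + (a - c)\<^sup>2)"
    by (rule real_sqrt_le_mono)
  then show ?thesis
    by (simp add: dist_Pair_Pair dist_real_def real_sqrt_divide)
qed

section \<open>Moments and product measures\<close>

lemma (in prob_space) expectation_abs_le_sqrt_second_moment:
  fixes X :: "'a \<Rightarrow> real"
  assumes "integrable M X" "integrable M (\<lambda>x. (X x)\<^sup>2)"
  shows "expectation (\<lambda>x. \<bar>X x\<bar>) \<le> sqrt (expectation (\<lambda>x. (X x)\<^sup>2))"
proof -
  have "0 \<le> variance (\<lambda>x. \<bar>X x\<bar>)"
    by (rule variance_positive)
  also have "\<dots> = expectation (\<lambda>x. (X x)\<^sup>2) - (expectation (\<lambda>x. \<bar>X x\<bar>))\<^sup>2"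
    using variance_eq[of "\<lambda>x. \<bar>X x\<bar>"] assms by simp
  finally show ?thesis
    by (intro real_le_rsqrt) simp
qed

lemma (in prob_space) second_moment_le_abs_moment:
  fixes X :: "'a \<Rightarrow> real"
  assumes [measurable]: "X \<in> borel_measurable M" and bound: "\<And>x. \<bar>X x\<bar> \<le> B"
  shows "expectation (\<lambda>x. (X x)\<^sup>2) \<le> B * expectation (\<lambda>x. \<bar>X x\<bar>)"
proof -
  have "integrable M (\<lambda>x. \<bar>X x\<bar>)"
    using bound by (intro integrable_const_bound[where B=B]) simp_all
  moreover have "integrable M (\<lambda>x. (X x)\<^sup>2)"
    using power_mono[OF bound abs_ge_zero, of _ 2] by (intro integrable_const_bound[where B="B\<^sup>2"]) simp_all
  moreover have "(X x)\<^sup>2 \<le> B * \<bar>X x\<bar>" for x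
    using mult_right_mono[OF bound[of x] abs_ge_zero[of "X x"]] by (simp add: power2_eq_square)
  ultimately have "expectation (\<lambda>x. (X x)\<^sup>2) \<le> expectation (\<lambda>x. B * \<bar>X x\<bar>)"
    by (intro integral_mono) simp_all
  then show ?thesis
    by simp
qed

lemma (in pair_prob_space) integral_diff_square:
  fixes a b :: "_ \<Rightarrow> real"
  assumes [measurable]: "a \<in> borel_measurable M1" "b \<in> borel_measurable M2"
    and bounds: "\<And>x. \<bar>a x\<bar> \<le> B" "\<And>y. \<bar>b y\<bar> \<le> B"
  shows "(\<integral>(x, y). (a x - b y)\<^sup>2 \<partial>(M1 \<Otimes>\<^sub>M M2))
    = (\<integral>x. (a x)\<^sup>2 \<partial>M1) - 2 * (\<integral>x. a x \<partial>M1) * (\<integral>y. b y \<partial>M2) + (\<integral>y. (b y)\<^sup>2 \<partial>M2)"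
proof -
  have sq_bound: "\<bar>u\<bar> \<le> C \<Longrightarrow> \<bar>u\<^sup>2\<bar> \<le> C * C" for u C :: real
    using power_mono[of "\<bar>u\<bar>" C 2] by (simp add: power2_eq_square)
  have [simp]: "integrable M1 a" "integrable M1 (\<lambda>x. (a x)\<^sup>2)"
    "integrable M2 b" "integrable M2 (\<lambda>y. (b y)\<^sup>2)"
    using bounds sq_bound
    by (intro M1.integrable_const_bound[where B=B] M1.integrable_const_bound[where B="B * B"]
        M2.integrable_const_bound[where B=B] M2.integrable_const_bound[where B="B * B"] AE_I2; simp)+
  have "\<bar>(a x - b y)\<^sup>2\<bar> \<le> (B + B) * (B + B)" for x y
    by (rule sq_bound) (rule order_trans[OF abs_triangle_ineq4 add_mono[OF bounds]])
  then have "integrable (M1 \<Otimes>\<^sub>M M2) (\<lambda>(x, y). (a x - b y)\<^sup>2)"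
    by (intro P.integrable_const_bound[where B="(B + B) * (B + B)"] AE_I2) auto
  then have "(\<integral>(x, y). (a x - b y)\<^sup>2 \<partial>(M1 \<Otimes>\<^sub>M M2)) = (\<integral>x. (\<integral>y. (a x - b y)\<^sup>2 \<partial>M2) \<partial>M1)"
    by (simp add: integral_fst)
  also have "\<dots> = (\<integral>x. (a x)\<^sup>2 - 2 * (\<integral>y. b y \<partial>M2) * a x + (\<integral>y. (b y)\<^sup>2 \<partial>M2) \<partial>M1)"
    using M2.prob_space by (simp add: power2_diff algebra_simps)
  finally show ?thesis
    using M1.prob_space by simp
qed

lemma distr_PiM_two_eq_pair_measure:
  assumes "sigma_finite_measure M"
  shows "distr (PiM {1..2::nat} (\<lambda>_. M)) (M \<Otimes>\<^sub>M M) (\<lambda>z. (z 1, z 2)) = M \<Otimes>\<^sub>M M"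
proof (rule pair_measure_eqI[OF assms assms, symmetric])
  interpret product_sigma_finite "\<lambda>_ :: nat. M"
    using assms by (simp add: product_sigma_finite_def)
  fix A B assume A: "A \<in> sets M" and B: "B \<in> sets M"
  let ?AB = "\<lambda>i :: nat. if i = 1 then A else B"
  have two: "{1..2::nat} = {1, 2}" "{Suc 0..2} = {1, 2}"
    by auto
  have "(\<lambda>z. (z 1, z 2)) -` (A \<times> B) \<inter> space (PiM {1..2} (\<lambda>_. M)) = PiE {1..2} ?AB"
    unfolding two using sets.sets_into_space[OF A] sets.sets_into_space[OF B]
    by (auto simp: space_PiM PiE_iff)
  then show "emeasure M A * emeasure M B
      = emeasure (distr (PiM {1..2::nat} (\<lambda>_. M)) (M \<Otimes>\<^sub>M M) (\<lambda>z. (z 1, z 2))) (A \<times> B)"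
    using A B by (subst emeasure_distr) (auto simp: emeasure_PiM two)
qed simp

section \<open>Distance to the nearest integer\<close>

definition int_dist :: "real \<Rightarrow> real" where
  "int_dist u = min (frac u) (1 - frac u)"

lemma int_dist_le: "int_dist u \<le> \<bar>u - of_int k\<bar>"
proof (cases "k \<le> \<lfloor>u\<rfloor>")
  case True
  then have "frac u \<le> u - of_int k" by (simp add: frac_def)
  then show ?thesis unfolding int_dist_def by linarith
next
  case False
  then have "1 - frac u \<le> of_int k - u" by (simp add: frac_def)
  then show ?thesis unfolding int_dist_def by linarith
qed

lemma int_dist_attained: "\<exists>k::int. int_dist u = \<bar>u - of_int k\<bar>"
proof (cases "frac u \<le> 1 - frac u")
  case True
  then have "int_dist u = \<bar>u - of_int \<lfloor>u\<rfloor>\<bar>" by (simp add: int_dist_def frac_def)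
  then show ?thesis by blast
next
  case False
  then have "int_dist u = \<bar>u - of_int (\<lfloor>u\<rfloor> + 1)\<bar>"
    using frac_lt_1[of u] by (simp add: int_dist_def frac_def)
  then show ?thesis by blast
qed

lemma circ_dist_eq_int_dist: "circ_dist x y = int_dist (x - y)"
proof -
  obtain k where k: "int_dist (x - y) = \<bar>x - y - of_int k\<bar>" using int_dist_attained by blast
  show ?thesis
    unfolding circ_dist_def by (rule cInf_eq_minimum) (use k int_dist_le[of "x - y"] in auto)
qed

lemma int_dist_nonneg: "0 \<le> int_dist u"
  using frac_lt_1[of u] by (simp add: int_dist_def)

lemma int_dist_le_half: "int_dist u \<le> 1/2"
  unfolding int_dist_def by linarith

lemma int_dist_add_int: "int_dist (u + of_int k) = int_dist u"
  by (simp add: int_dist_def frac_def)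

lemma int_dist_minus: "int_dist (- u) = int_dist u"
proof (cases "u \<in> \<int>")
  case True
  then have "frac u = 0" "frac (- u) = 0" by (simp_all add: frac_eq_0_iff)
  then show ?thesis by (simp only: int_dist_def)
qed (simp add: int_dist_def frac_neg)

lemma int_dist_add_half: "int_dist (u + 1/2) = 1/2 - int_dist u"
proof (cases "frac u < 1/2")
  case True
  then have "frac (u + 1/2) = frac u + 1/2"
    using frac_ge_0[of u] by (simp add: frac_add)
  with True show ?thesis by (auto simp: int_dist_def)
next
  case False
  then have "frac (u + 1/2) = frac u - 1/2"
    using frac_lt_1[of u] by (simp add: frac_add)
  with False show ?thesis using frac_lt_1[of u] by (auto simp: int_dist_def)
qed

lemma int_dist_eq_self: "0 \<le> u \<Longrightarrow> u \<le> 1/2 \<Longrightarrow> int_dist u = u"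
  by (simp add: int_dist_def frac_eq)

lemma int_dist_eq_one_minus: "1/2 \<le> u \<Longrightarrow> u < 1 \<Longrightarrow> int_dist u = 1 - u"
  by (simp add: int_dist_def frac_eq)

lemma lipschitz_int_dist: "1-lipschitz_on UNIV int_dist"
proof (rule lipschitz_onI)
  have le: "int_dist u \<le> int_dist v + \<bar>u - v\<bar>" for u v
  proof -
    obtain k where "int_dist v = \<bar>v - of_int k\<bar>" using int_dist_attained by blast
    then show ?thesis using int_dist_le[of u k] by linarith
  qed
  show "dist (int_dist u) (int_dist v) \<le> 1 * dist u v" for u v
    using le[of u v] le[of v u] by (simp add: dist_real_def abs_minus_commute)
qed simp

lemma continuous_on_int_dist: "continuous_on S int_dist"
  using lipschitz_on_continuous_on[OF lipschitz_int_dist] continuous_on_subset by blast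

lemma int_dist_borel_measurable [measurable]: "int_dist \<in> borel_measurable borel"
  by (rule borel_measurable_continuous_onI[OF continuous_on_int_dist])

lemma doubling_iterate: "\<exists>k::int. (doubling ^^ t) x = 2 ^ t * x - of_int k"
proof (induction t)
  case 0
  show ?case by (rule exI[of _ 0]) simp
next
  case (Suc t)
  then obtain k where "(doubling ^^ t) x = 2 ^ t * x - of_int k" by blast
  then have "(doubling ^^ Suc t) x = frac (2 * (2 ^ t * x - of_int k))"
    by (simp add: doubling_def)
  also have "\<dots> = 2 ^ Suc t * x - of_int (2 * k + \<lfloor>2 * (2 ^ t * x - of_int k)\<rfloor>)"
    by (simp add: frac_def algebra_simps)
  finally show ?case by blast
qed

lemma circ_dist_doubling_iterate:
  "circ_dist ((doubling ^^ t) x) ((doubling ^^ t) y) = int_dist (2 ^ t * (x - y))"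
proof -
  obtain k l where "(doubling ^^ t) x = 2 ^ t * x - of_int k" "(doubling ^^ t) y = 2 ^ t * y - of_int l"
    using doubling_iterate by meson
  then have "(doubling ^^ t) x - (doubling ^^ t) y = 2 ^ t * (x - y) + of_int (l - k)"
    by (simp add: algebra_simps)
  then show ?thesis by (simp only: circ_dist_eq_int_dist int_dist_add_int)
qed

section \<open>Integrals of continuous 1-periodic functions\<close>

text \<open>The bounds 0 and 1 in \<open>LBINT x=0..1\<close> are numerals of type ereal, whereas the
  substitution and additivity rules of the library produce \<open>ereal 0\<close> and \<open>ereal 1\<close>;
  \<open>zero_ereal_def\<close> and \<open>one_ereal_def\<close> reconcile the two forms.\<close>

definition periodic_continuous :: "(real \<Rightarrow> real) \<Rightarrow> bool" where
  "periodic_continuous f \<longleftrightarrow> continuous_on UNIV f \<and> (\<forall>x. f (x + 1) = f x)"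

lemma periodic_continuousD:
  assumes "periodic_continuous f"
  shows "continuous_on S f" "f (x + of_int k) = f x"
proof -
  show "continuous_on S f"
    using assms continuous_on_subset unfolding periodic_continuous_def by blast
  have "f (y + real n) = f y" for y n
  proof (induction n arbitrary: y)
    case (Suc n)
    then show ?case
      using assms by (simp add: periodic_continuous_def add.assoc [symmetric])
  qed simp
  from this[of "x + of_int k" "nat (- k)"] this[of x "nat k"]
  show "f (x + of_int k) = f x"
    by (cases "k \<ge> 0") simp_all
qed

lemma periodic_continuous_mult:
  "periodic_continuous f \<Longrightarrow> periodic_continuous g \<Longrightarrow> periodic_continuous (\<lambda>x. f x * g x)"
  unfolding periodic_continuous_def by (auto intro: continuous_on_mult)

lemma periodic_continuous_scale:
  assumes "periodic_continuous f"
  shows "periodic_continuous (\<lambda>x. f (real n * x))"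
  unfolding periodic_continuous_def
proof
  show "continuous_on UNIV (\<lambda>x. f (real n * x))"
    by (rule continuous_on_compose2[OF periodic_continuousD(1)[OF assms, where S=UNIV]])
      (auto intro: continuous_intros)
  show "\<forall>x. f (real n * (x + 1)) = f (real n * x)"
    using periodic_continuousD(2)[OF assms, of _ "int n"] by (simp add: distrib_left)
qed

lemma LBINT_affine_substitution:
  fixes f :: "real \<Rightarrow> real" and a b s c :: real
  assumes "continuous_on UNIV f" "a \<le> b"
  shows "s * (LBINT x=a..b. f (s * x + c)) = (LBINT y=s * a + c..s * b + c. f y)"
proof -
  have "(LBINT x=a..b. s *\<^sub>R f (s * x + c)) = (LBINT y=s * a + c..s * b + c. f y)"
    by (rule interval_integral_substitution_finite)
      (use assms in \<open>auto intro!: derivative_eq_intros continuous_on_subset[OF assms(1)]\<close>)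
  then show ?thesis by simp
qed

lemma periodic_continuous_interval_integrable:
  fixes a b :: real
  assumes "periodic_continuous f" "a \<le> b"
  shows "interval_lebesgue_integrable lborel a b f"
  by (rule interval_integrable_continuous_on[OF assms(2) periodic_continuousD(1)[OF assms(1), where S="{a..b}"]])

lemma LBINT_periodic_multiple:
  assumes f: "periodic_continuous f"
  shows "(LBINT x=0..real n. f x) = real n * (LBINT x=0..1. f x)"
proof (induction n)
  case (Suc n)
  have "(LBINT x=0..real (Suc n). f x) = (LBINT x=0..real n. f x) + (LBINT x=real n..1 + real n. f x)"
    using interval_integral_sum[of 0 "real n" "1 + real n" f]
      periodic_continuous_interval_integrable[OF f, of 0 "1 + real n"]
    by (simp add: min_def max_def zero_ereal_def)
  also have "(LBINT x=real n..1 + real n. f x) = (LBINT x=0..1. f (x + real n))"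
    using LBINT_affine_substitution[OF periodic_continuousD(1)[OF f], of 0 1 1 "real n"]
    by (simp add: zero_ereal_def one_ereal_def)
  also have "\<dots> = (LBINT x=0..1. f x)"
    using periodic_continuousD(2)[OF f, of _ "int n"] by simp
  finally show ?case using Suc.IH by (simp add: algebra_simps)
qed (simp add: zero_ereal_def)

lemma LBINT_periodic_scale:
  assumes f: "periodic_continuous f" and "n > 0"
  shows "(LBINT x=0..1. f (real n * x)) = (LBINT x=0..1. f x)"
proof -
  have "real n * (LBINT x=0..1. f (real n * x)) = (LBINT x=0..real n. f x)"
    using LBINT_affine_substitution[OF periodic_continuousD(1)[OF f], of 0 1 "real n" 0]
    by (simp add: zero_ereal_def one_ereal_def)
  also have "\<dots> = real n * (LBINT x=0..1. f x)"
    by (rule LBINT_periodic_multiple[OF f])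
  finally show ?thesis using \<open>n > 0\<close> by simp
qed

lemma LBINT_periodic_shift:
  assumes f: "periodic_continuous f"
  shows "(LBINT x=0..1. f (x + c)) = (LBINT x=0..1. f x)"
proof -
  define r where "r = frac c"
  have r: "0 \<le> r" "r < 1"
    unfolding r_def by (simp_all add: frac_lt_1)
  have "(LBINT x=0..1. f (x + c)) = (LBINT x=0..1. f (x + r))"
    using periodic_continuousD(2)[OF f, of "_ + r" "\<lfloor>c\<rfloor>"] by (simp add: r_def frac_def add.assoc)
  also have "\<dots> = (LBINT x=r..1 + r. f x)"
    using LBINT_affine_substitution[OF periodic_continuousD(1)[OF f], of 0 1 1 r]
    by (simp add: zero_ereal_def one_ereal_def)
  also have "\<dots> = (LBINT x=r..1. f x) + (LBINT x=1..1 + r. f x)"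
    using interval_integral_sum[of r 1 "1 + r" f] periodic_continuous_interval_integrable[OF f, of r "1 + r"] r
    by (simp add: min_def max_def)
  also have "(LBINT x=1..1 + r. f x) = (LBINT x=0..r. f (x + 1))"
    using LBINT_affine_substitution[OF periodic_continuousD(1)[OF f], of 0 r 1 1] r
    by (simp add: add.commute zero_ereal_def one_ereal_def)
  also have "\<dots> = (LBINT x=0..r. f x)"
    using periodic_continuousD(2)[OF f, of _ 1] by simp
  also have "(LBINT x=r..1. f x) + (LBINT x=0..r. f x) = (LBINT x=0..1. f x)"
    using interval_integral_sum[of 0 r 1 f] periodic_continuous_interval_integrable[OF f, of 0 1] r
    by (simp add: min_def max_def zero_ereal_def one_ereal_def add.commute)
  finally show ?thesis .
qed

lemma periodic_continuous_int_dist: "periodic_continuous int_dist"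
  using int_dist_add_int[of _ 1] by (simp add: periodic_continuous_def continuous_on_int_dist)

lemma periodic_continuous_int_dist_pow2: "periodic_continuous (\<lambda>x. int_dist (2 ^ t * x))"
  using periodic_continuous_scale[OF periodic_continuous_int_dist, of "2 ^ t"] by simp

lemma LBINT_int_dist_power: "(LBINT x=0..1. int_dist x ^ k) = 1 / (2 ^ k * (real k + 1))"
proof -
  define F where "F x = x ^ Suc k / (real k + 1)" for x :: real
  have F': "(F has_real_derivative x ^ k) (at x within S)" for x S
    unfolding F_def by (rule DERIV_cong[OF DERIV_cdivide[OF DERIV_pow]]) (simp add: field_simps)
  have "(LBINT x=ereal 0..ereal (1/2). int_dist x ^ k) = (LBINT x=ereal 0..ereal (1/2). x ^ k)"
    by (rule interval_integral_cong) (simp add: int_dist_eq_self einterval_iff)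
  also have "\<dots> = F (1/2) - F 0"
    by (rule interval_integral_FTC_finite)
      (auto intro: continuous_intros simp: F' has_real_derivative_iff_has_vector_derivative[symmetric])
  finally have lower: "(LBINT x=ereal 0..ereal (1/2). int_dist x ^ k) = F (1/2)"
    by (simp add: F_def)
  have "(LBINT x=ereal (1/2)..ereal 1. int_dist x ^ k) = (LBINT x=ereal (1/2)..ereal 1. (1 - x) ^ k)"
    by (rule interval_integral_cong) (simp add: int_dist_eq_one_minus einterval_iff)
  also have "\<dots> = - F (1 - 1) - (- F (1 - 1/2))"
    by (rule interval_integral_FTC_finite)
      (auto intro!: derivative_eq_intros DERIV_chain2[OF F'] continuous_intros
        simp: has_real_derivative_iff_has_vector_derivative[symmetric])
  finally have upper: "(LBINT x=ereal (1/2)..ereal 1. int_dist x ^ k) = F (1/2)"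
    by (simp add: F_def)
  have "(LBINT x=0..1. int_dist x ^ k)
      = (LBINT x=ereal 0..ereal (1/2). int_dist x ^ k) + (LBINT x=ereal (1/2)..ereal 1. int_dist x ^ k)"
    using interval_integral_sum[of 0 "ereal (1/2)" 1 "\<lambda>x. int_dist x ^ k"]
      interval_integrable_continuous_on[of 0 1 "\<lambda>x. int_dist x ^ k"]
    by (simp add: min_def max_def continuous_on_int_dist continuous_on_power zero_ereal_def one_ereal_def)
  then show ?thesis
    unfolding lower upper F_def by (simp add: power_one_over divide_simps)
qed

lemma LBINT_int_dist_pow2: "(LBINT x=0..1. int_dist (2 ^ t * x)) = 1/4"
  using LBINT_periodic_scale[OF periodic_continuous_int_dist, of "2 ^ t"] LBINT_int_dist_power[of 1]
  by simp

lemma LBINT_int_dist_pow2_product_less: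
  assumes "s < t"
  shows "(LBINT x=0..1. int_dist (2 ^ s * x) * int_dist (2 ^ t * x)) = 1/16"
proof -
  define G where "G x = int_dist (2 ^ s * x) * int_dist (2 ^ t * x)" for x
  have G: "periodic_continuous G"
    unfolding G_def by (intro periodic_continuous_mult periodic_continuous_int_dist_pow2)
  obtain k where t: "t = Suc s + k"
    using assms less_iff_Suc_add by auto
  \<comment> \<open>Shifting by half a period of the slower factor flips it and leaves the faster one unchanged.\<close>
  have shift: "G (x + 1 / 2 ^ Suc s) = 1/2 * int_dist (2 ^ t * x) - G x" for x
  proof -
    have slow: "2 ^ s * (x + 1 / 2 ^ Suc s) = 2 ^ s * x + 1/2"
      by (simp add: field_simps)
    have fast: "2 ^ t * (x + 1 / 2 ^ Suc s) = 2 ^ t * x + of_int (2 ^ k)"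
      by (simp add: t field_simps power_add)
    show ?thesis
      unfolding G_def slow fast int_dist_add_half int_dist_add_int by (simp add: algebra_simps)
  qed
  have "(LBINT x=0..1. G x) = (LBINT x=0..1. G (x + 1 / 2 ^ Suc s))"
    by (rule LBINT_periodic_shift[OF G, symmetric])
  also have "\<dots> = (LBINT x=0..1. 1/2 * int_dist (2 ^ t * x) - G x)"
    by (simp only: shift)
  also have "\<dots> = 1/8 - (LBINT x=0..1. G x)"
    using LBINT_int_dist_pow2[of t]
      periodic_continuous_interval_integrable[OF periodic_continuous_int_dist_pow2, of 0 1 t]
      periodic_continuous_interval_integrable[OF G, of 0 1]
    by (simp add: zero_ereal_def one_ereal_def)
  finally show ?thesis
    by (simp add: G_def)
qed

lemma LBINT_int_dist_pow2_product:
  "(LBINT x=0..1. int_dist (2 ^ s * x) * int_dist (2 ^ t * x)) = (if s = t then 1/12 else 1/16)"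
proof (cases s t rule: linorder_cases)
  case equal
  then show ?thesis
    using LBINT_periodic_scale[OF periodic_continuous_mult[OF periodic_continuous_int_dist
        periodic_continuous_int_dist], of "2 ^ t"] LBINT_int_dist_power[of 2]
    by (simp add: power2_eq_square)
next
  case greater
  then show ?thesis
    using LBINT_int_dist_pow2_product_less[of t s] by (simp add: mult.commute)
qed (simp add: LBINT_int_dist_pow2_product_less)

section \<open>Haar measure and the averaged distance\<close>

interpretation haar: prob_space haar
  unfolding haar_def by (rule prob_space_uniform_measure) simp_all

lemma sets_haar [simp, measurable_cong]: "sets haar = sets borel"
  by (simp add: haar_def)

lemma space_haar [simp]: "space haar = UNIV"
  by (simp add: haar_def)

lemma integral_haar_eq_LBINT:
  assumes "continuous_on UNIV f"
  shows "(\<integral>x. f x \<partial>haar) = (LBINT x=0..1. f x)"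
proof -
  have [measurable]: "f \<in> borel_measurable borel"
    by (rule borel_measurable_continuous_onI[OF assms])
  have density: "haar = density lborel (\<lambda>x. ennreal (indicator {0..<1} x))"
    by (simp add: haar_def uniform_measure_def divide_ennreal_def ennreal_indicator)
  have "(\<integral>x. f x \<partial>haar) = (LINT x:{0..<1}|lborel. f x)"
    unfolding density set_lebesgue_integral_def by (rule integral_density) simp_all
  also have "\<dots> = (LINT x:{0<..<1}|lborel. f x)"
    by (rule set_integral_discrete_difference[where X="{0}"]) auto
  also have "{0<..<1} = einterval 0 1"
    by (auto simp: einterval_iff)
  finally show ?thesis
    by (simp add: interval_lebesgue_integral_def)
qed

lemma integral_haar_shift:
  assumes "periodic_continuous f"
  shows "(\<integral>x. f (x + c) \<partial>haar) = (LBINT x=0..1. f x)"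
proof -
  have "continuous_on UNIV (\<lambda>x. f (x + c))"
    by (rule continuous_on_compose2[OF periodic_continuousD(1)[OF assms, where S=UNIV]])
      (auto intro: continuous_intros)
  then show ?thesis
    by (simp add: integral_haar_eq_LBINT LBINT_periodic_shift[OF assms])
qed

lemma integrable_haar_bounded:
  fixes f :: "real \<Rightarrow> real"
  assumes "f \<in> borel_measurable borel" "\<And>x. \<bar>f x\<bar> \<le> B"
  shows "integrable haar f"
  using assms by (intro haar.integrable_const_bound[where B=B] AE_I2) simp_all

lemma integral_haar_int_dist_pow2_product:
  "(\<integral>y. int_dist (2 ^ s * (x - y)) * int_dist (2 ^ t * (x - y)) \<partial>haar) = (if s = t then 1/12 else 1/16)"
proof -
  have "int_dist (2 ^ k * (x - y)) = int_dist (2 ^ k * (y + - x))" for k y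
    using int_dist_minus[of "2 ^ k * (y - x)"] by (simp add: algebra_simps)
  then show ?thesis
    using integral_haar_shift[OF periodic_continuous_mult[OF periodic_continuous_int_dist_pow2
        periodic_continuous_int_dist_pow2], where c="- x"]
    by (simp add: LBINT_int_dist_pow2_product)
qed

lemma integral_haar_int_dist_pow2: "(\<integral>y. int_dist (2 ^ t * (x - y)) \<partial>haar) = 1/4"
proof -
  have "int_dist (2 ^ t * (x - y)) = int_dist (2 ^ t * (y + - x))" for y
    using int_dist_minus[of "2 ^ t * (y - x)"] by (simp add: algebra_simps)
  then show ?thesis
    using integral_haar_shift[OF periodic_continuous_int_dist_pow2, where c="- x"]
    by (simp add: LBINT_int_dist_pow2)
qed

lemma avg_dist_eq: "avg_dist m x y = (\<Sum>t<m. int_dist (2 ^ t * (x - y))) / real m"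
  by (simp add: avg_dist_def circ_dist_doubling_iterate)

lemma avg_dist_borel_measurable [measurable]:
  assumes [measurable]: "f \<in> borel_measurable M" "g \<in> borel_measurable M"
  shows "(\<lambda>x. avg_dist m (f x) (g x)) \<in> borel_measurable M"
  unfolding avg_dist_eq by measurable

lemma avg_dist_bounds: "0 \<le> avg_dist m x y" "avg_dist m x y \<le> 1/2"
proof -
  show "0 \<le> avg_dist m x y"
    unfolding avg_dist_eq by (simp add: sum_nonneg int_dist_nonneg)
  have "(\<Sum>t<m. int_dist (2 ^ t * (x - y))) \<le> real m * (1/2)"
    using sum_mono[of "{..<m}" "\<lambda>t. int_dist (2 ^ t * (x - y))" "\<lambda>_. 1/2"] int_dist_le_half by simp
  then show "avg_dist m x y \<le> 1/2"
    unfolding avg_dist_eq by (cases "m = 0") (simp_all add: divide_le_eq)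
qed

lemma integral_haar_avg_dist:
  assumes "0 < m"
  shows "(\<integral>y. avg_dist m x y \<partial>haar) = 1/4"
proof -
  have "integrable haar (\<lambda>y. int_dist (2 ^ t * (x - y)))" for t
    using int_dist_nonneg int_dist_le_half by (intro integrable_haar_bounded[where B="1/2"]) simp_all
  then show ?thesis
    using assms by (simp add: avg_dist_eq integral_haar_int_dist_pow2)
qed

lemma integral_haar_avg_dist_sq:
  assumes "0 < m"
  shows "(\<integral>y. (avg_dist m x y)\<^sup>2 \<partial>haar) = 1/16 + 1/(48 * real m)"
proof -
  have "\<bar>int_dist a * int_dist b\<bar> \<le> 1" for a b
    using int_dist_nonneg[of a] int_dist_nonneg[of b] int_dist_le_half[of a] int_dist_le_half[of b]
    by (simp add: abs_mult mult_le_one)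
  then have integrable: "integrable haar (\<lambda>y. int_dist (2 ^ s * (x - y)) * int_dist (2 ^ t * (x - y)))" for s t
    by (intro integrable_haar_bounded[where B=1]) simp_all
  have "(\<integral>y. (avg_dist m x y)\<^sup>2 \<partial>haar)
      = (\<integral>y. (\<Sum>s<m. \<Sum>t<m. int_dist (2 ^ s * (x - y)) * int_dist (2 ^ t * (x - y))) / (real m)\<^sup>2 \<partial>haar)"
    by (simp add: avg_dist_eq power_divide power2_eq_square sum_product)
  also have "\<dots> = (\<Sum>s<m. \<Sum>t<m. (if s = t then 1/12 else 1/16 :: real)) / (real m)\<^sup>2"
    by (simp add: integrable integral_haar_int_dist_pow2_product)
  also have "(\<Sum>s<m. \<Sum>t<m. (if s = t then 1/12 else 1/16 :: real)) = real m * (real m / 16 + 1/48)"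
  proof -
    have "(\<Sum>t<m. (if s = t then 1/12 else 1/16 :: real)) = (\<Sum>t<m. 1/16 + (if s = t then 1/48 else 0))" for s
      by (intro sum.cong) auto
    also have "\<dots> s = real m / 16 + 1/48" if "s < m" for s
      using that by (simp add: sum.distrib)
    finally show ?thesis by simp
  qed
  also have "real m * (real m / 16 + 1/48) / (real m)\<^sup>2 = 1/16 + 1/(48 * real m)"
    using assms by (simp add: field_simps power2_eq_square)
  finally show ?thesis .
qed

section \<open>The fluctuation of the averaged distance\<close>

interpretation haar2: pair_prob_space haar haar
  by (simp add: pair_prob_space_def pair_sigma_finite_def haar.prob_space_axioms prob_space_imp_sigma_finite)

interpretation haar4: pair_prob_space "haar \<Otimes>\<^sub>M haar" "haar \<Otimes>\<^sub>M haar"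
  by (simp add: pair_prob_space_def pair_sigma_finite_def haar2.prob_space_axioms prob_space_imp_sigma_finite)

abbreviation haar4 :: "((real \<times> real) \<times> (real \<times> real)) measure" where
  "haar4 \<equiv> (haar \<Otimes>\<^sub>M haar) \<Otimes>\<^sub>M (haar \<Otimes>\<^sub>M haar)"

lemma sets_haar2: "sets (haar \<Otimes>\<^sub>M haar) = sets borel"
  unfolding borel_prod[symmetric] by (rule sets_pair_measure_cong) simp_all

definition avg_gap :: "nat \<Rightarrow> (real \<times> real) \<times> (real \<times> real) \<Rightarrow> real" where
  "avg_gap m = (\<lambda>((x1, y1), (x2, y2)). avg_dist m x1 x2 - avg_dist m y1 y2)"

lemma avg_gap_borel_measurable [measurable]: "avg_gap m \<in> borel_measurable haar4"
  unfolding avg_gap_def case_prod_unfold by measurable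

lemma abs_avg_gap_le: "\<bar>avg_gap m w\<bar> \<le> 1/2"
proof -
  obtain x1 y1 x2 y2 where "w = ((x1, y1), (x2, y2))"
    by (metis prod.collapse)
  then show ?thesis
    using avg_dist_bounds[of m x1 x2] avg_dist_bounds[of m y1 y2] by (simp add: avg_gap_def abs_if)
qed

lemma integrable_avg_gap:
  "integrable haar4 (avg_gap m)"
  "integrable haar4 (\<lambda>w. (avg_gap m w)\<^sup>2)"
proof -
  show "integrable haar4 (avg_gap m)"
    using abs_avg_gap_le[of m] by (intro haar4.integrable_const_bound[where B="1/2"] AE_I2) simp_all
  show "integrable haar4 (\<lambda>w. (avg_gap m w)\<^sup>2)"
    using power_mono[OF abs_avg_gap_le abs_ge_zero, of m _ 2]
    by (intro haar4.integrable_const_bound[where B="(1/2)\<^sup>2"] AE_I2) simp_all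
qed

lemma integral_avg_gap_sq:
  assumes "0 < m"
  shows "(\<integral>w. (avg_gap m w)\<^sup>2 \<partial>haar4) = 1 / (24 * real m)"
proof -
  have inner: "(\<integral>q. (avg_gap m (p, q))\<^sup>2 \<partial>(haar \<Otimes>\<^sub>M haar)) = 1 / (24 * real m)" for p
  proof -
    obtain x y where p: "p = (x, y)"
      by fastforce
    have "(\<integral>q. (avg_gap m (p, q))\<^sup>2 \<partial>(haar \<Otimes>\<^sub>M haar))
        = (\<integral>(x', y'). (avg_dist m x x' - avg_dist m y y')\<^sup>2 \<partial>(haar \<Otimes>\<^sub>M haar))"
      by (simp add: p avg_gap_def case_prod_beta')
    also have "\<dots> = 2 * (1/16 + 1/(48 * real m)) - 2 * (1/4) * (1/4)"
      using avg_dist_bounds[of m]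
      by (subst haar2.integral_diff_square[where B="1/2"])
        (simp_all add: abs_le_iff integral_haar_avg_dist integral_haar_avg_dist_sq assms)
    finally show ?thesis
      by (simp add: field_simps)
  qed
  have "(\<integral>w. (avg_gap m w)\<^sup>2 \<partial>haar4)
      = (\<integral>p. (\<integral>q. (avg_gap m (p, q))\<^sup>2 \<partial>(haar \<Otimes>\<^sub>M haar)) \<partial>(haar \<Otimes>\<^sub>M haar))"
    by (rule haar4.integral_fst'[OF integrable_avg_gap(2), symmetric])
  then show ?thesis
    using haar2.prob_space by (simp add: inner)
qed

lemma integral_abs_avg_gap_bounds:
  assumes "0 < m"
  shows "1 / (12 * real m) \<le> (\<integral>w. \<bar>avg_gap m w\<bar> \<partial>haar4)"
    and "(\<integral>w. \<bar>avg_gap m w\<bar> \<partial>haar4) \<le> 1 / sqrt (24 * real m)"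
proof -
  have "1 / (24 * real m) \<le> 1/2 * (\<integral>w. \<bar>avg_gap m w\<bar> \<partial>haar4)"
    using haar4.second_moment_le_abs_moment[OF avg_gap_borel_measurable[of m] abs_avg_gap_le[of m]]
    by (simp add: integral_avg_gap_sq assms)
  then show "1 / (12 * real m) \<le> (\<integral>w. \<bar>avg_gap m w\<bar> \<partial>haar4)"
    by simp
  show "(\<integral>w. \<bar>avg_gap m w\<bar> \<partial>haar4) \<le> 1 / sqrt (24 * real m)"
    using haar4.expectation_abs_le_sqrt_second_moment[OF integrable_avg_gap[of m]]
    by (simp add: integral_avg_gap_sq assms real_sqrt_divide)
qed

section \<open>The laws Q_m\<close>

lemma sets_Q_law [simp, measurable_cong]: "sets (Q_law m lam) = sets borel"
  by (simp add: Q_law_def)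

lemma space_Q_law [simp]: "space (Q_law m lam) = UNIV"
  using sets_eq_imp_space_eq[OF sets_Q_law] by simp

lemma sets_diag_meas [simp, measurable_cong]: "sets diag_meas = sets borel"
  by (simp add: diag_meas_def)

lemma prob_space_diag_meas: "prob_space diag_meas"
  unfolding diag_meas_def by (rule haar.prob_space_distr) simp

lemma diagonal_in_borel [measurable]: "{z :: real \<times> real. fst z = snd z} \<in> sets borel"
  by (intro borel_closed closed_Collect_eq continuous_intros)

lemma avg_dist_pair_measurable [measurable]:
  "(\<lambda>((x1, y1), (x2, y2)). (avg_dist m x1 x2, avg_dist m y1 y2))
    \<in> measurable (borel \<Otimes>\<^sub>M borel) (borel :: (real \<times> real) measure)"
  unfolding case_prod_unfold borel_prod[symmetric] by measurable

lemma Q_law_diag_meas: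
  "Q_law m diag_meas = distr haar4 borel
     (\<lambda>((x1, y1), (x2, y2)). (avg_dist m x1 x2, avg_dist m x1 x2))"
proof -
  have diag2: "diag_meas \<Otimes>\<^sub>M diag_meas = distr (haar \<Otimes>\<^sub>M haar) (borel \<Otimes>\<^sub>M borel) (\<lambda>(x, y). ((x, x), (y, y)))"
    unfolding diag_meas_def
    by (rule pair_measure_distr) (simp_all add: prob_space_imp_sigma_finite prob_space_diag_meas[unfolded diag_meas_def])
  have fst_marginals: "haar \<Otimes>\<^sub>M haar = distr haar4 (haar \<Otimes>\<^sub>M haar) (\<lambda>(p, q). (fst p, fst q))"
    using pair_measure_distr[of fst "haar \<Otimes>\<^sub>M haar" haar fst "haar \<Otimes>\<^sub>M haar" haar]
    by (simp add: haar.distr_pair_fst prob_space_imp_sigma_finite haar.prob_space_axioms case_prod_beta')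
  show ?thesis
    unfolding Q_law_def diag2
    by (subst fst_marginals, subst distr_distr, simp_all, subst distr_distr) (simp_all add: comp_def case_prod_beta')
qed

lemma W1_Q_law_le:
  assumes "0 < m"
  shows "W1 dist (Q_law m diag_meas) (Q_law m (haar \<Otimes>\<^sub>M haar)) \<le> ennreal (1 / sqrt (24 * real m))"
proof -
  define F where "F = (\<lambda>((x1, y1), (x2, y2)).
    ((avg_dist m x1 x2, avg_dist m x1 x2), (avg_dist m x1 x2, avg_dist m y1 y2)))"
  have [measurable]: "F \<in> measurable haar4
      (Q_law m diag_meas \<Otimes>\<^sub>M Q_law m (haar \<Otimes>\<^sub>M haar))"
    unfolding F_def case_prod_unfold by measurable
  have "W1 dist (Q_law m diag_meas) (Q_law m (haar \<Otimes>\<^sub>M haar))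
      \<le> (\<integral>\<^sup>+ w. ennreal (dist (fst (F w)) (snd (F w))) \<partial>haar4)"
  proof (rule W1_le_nn_integral_distr[OF haar4.prob_space_axioms])
    show "distr haar4 (Q_law m diag_meas) (fst \<circ> F) = Q_law m diag_meas"
      by (subst (2) Q_law_diag_meas) (auto intro!: distr_cong simp: F_def)
    show "distr haar4 (Q_law m (haar \<Otimes>\<^sub>M haar)) (snd \<circ> F)
        = Q_law m (haar \<Otimes>\<^sub>M haar)"
      by (subst (2) Q_law_def) (auto intro!: distr_cong simp: F_def)
  qed measurable
  also have "\<dots> = (\<integral>\<^sup>+ w. ennreal \<bar>avg_gap m w\<bar> \<partial>haar4)"
    by (intro nn_integral_cong) (auto simp: F_def avg_gap_def dist_Pair_Pair dist_real_def split: prod.splits)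
  also have "\<dots> = ennreal (\<integral>w. \<bar>avg_gap m w\<bar> \<partial>haar4)"
    using integrable_avg_gap(1) by (intro nn_integral_eq_integral) simp_all
  also have "\<dots> \<le> ennreal (1 / sqrt (24 * real m))"
    using integral_abs_avg_gap_bounds(2)[OF assms] by (rule ennreal_leI)
  finally show ?thesis .
qed

lemma W1_Q_law_ge:
  assumes "0 < m"
  shows "ennreal (1 / (12 * sqrt 2 * real m)) \<le> W1 dist (Q_law m diag_meas) (Q_law m (haar \<Otimes>\<^sub>M haar))"
proof -
  have [measurable]: "(\<lambda>z :: real \<times> real. \<bar>fst z - snd z\<bar> / sqrt 2) \<in> borel_measurable borel"
    by (intro borel_measurable_continuous_onI continuous_intros) simp
  have "ennreal (1 / (12 * sqrt 2 * real m))
      \<le> ennreal ((\<integral>w. \<bar>avg_gap m w\<bar> \<partial>haar4) / sqrt 2)"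
    using integral_abs_avg_gap_bounds(1)[OF assms] by (intro ennreal_leI) (simp add: field_simps)
  also have "\<dots> = (\<integral>\<^sup>+ w. ennreal (\<bar>avg_gap m w\<bar> / sqrt 2) \<partial>haar4)"
    using integrable_avg_gap(1) by (subst nn_integral_eq_integral) simp_all
  also have "\<dots> = (\<integral>\<^sup>+ z. ennreal (\<bar>fst z - snd z\<bar> / sqrt 2) \<partial>Q_law m (haar \<Otimes>\<^sub>M haar))"
    unfolding Q_law_def
    by (subst nn_integral_distr) (auto simp: avg_gap_def case_prod_unfold intro!: nn_integral_cong)
  also have "\<dots> \<le> W1 dist (Q_law m diag_meas) (Q_law m (haar \<Otimes>\<^sub>M haar))"
  proof (rule nn_integral_le_W1[where S="\<lambda>z. fst z = snd z"])
    show "AE z in Q_law m diag_meas. fst z = snd z"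
      unfolding Q_law_diag_meas by (subst AE_distr_iff) (simp_all add: case_prod_unfold)
    show "\<And>z w. fst z = snd z \<Longrightarrow> ennreal (\<bar>fst w - snd w\<bar> / sqrt 2) \<le> ennreal (dist z w)"
      using dist_diagonal_ge by (auto intro!: ennreal_leI)
  qed simp_all
  finally show ?thesis .
qed

section \<open>Distance arrays\<close>

lemma doubling_iterate_borel_measurable [measurable]: "(doubling ^^ t) \<in> borel_measurable borel"
proof (induction t)
  case (Suc t)
  have [measurable]: "doubling \<in> borel_measurable borel"
    unfolding doubling_def frac_def by measurable
  show ?case
    using Suc by (simp add: measurable_comp)
qed simp

lemma dist_array_measurable:
  assumes lam: "sets lam = sets borel" and pr: "pr \<in> borel_measurable borel"
  shows "dist_array n m pr \<in> measurable (PiM {1..n} (\<lambda>_. lam)) (PiM (arr_idx n m) (\<lambda>_. borel))"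
  unfolding dist_array_def
proof (rule measurable_restrict)
  fix \<iota> assume "\<iota> \<in> arr_idx n m"
  then obtain i j a b where \<iota>: "\<iota> = (i, j, a, b)" and ij: "i \<in> {1..n}" "j \<in> {1..n}"
    by (auto simp: arr_idx_def)
  have component: "(\<lambda>z. (doubling ^^ t) (pr (z k))) \<in> borel_measurable (PiM {1..n} (\<lambda>_. lam))"
    if "k \<in> {1..n}" for k t
    using measurable_compose[OF measurable_component_singleton[OF that] pr[folded measurable_cong_sets[OF lam refl]]]
    by (rule measurable_compose) simp
  show "(\<lambda>z. case \<iota> of (i, j, a, b) \<Rightarrow> circ_dist ((doubling ^^ a) (pr (z i))) ((doubling ^^ b) (pr (z j))))
      \<in> borel_measurable (PiM {1..n} (\<lambda>_. lam))"
    unfolding \<iota> prod.case circ_dist_eq_int_dist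
    by (intro measurable_compose[OF borel_measurable_diff int_dist_borel_measurable] component ij)
qed

definition array_avg_dist :: "nat \<Rightarrow> array \<Rightarrow> real" where
  "array_avg_dist m D = (\<Sum>t<m. D (1, 2, t, t)) / real m"

lemma array_avg_dist_measurable [measurable]:
  "array_avg_dist m \<in> borel_measurable (PiM (arr_idx 2 m) (\<lambda>_. borel))"
proof -
  have "(1, 2, t, t) \<in> arr_idx 2 m" if "t < m" for t
    using that by (simp add: arr_idx_def)
  then show ?thesis
    unfolding array_avg_dist_def by measurable
qed

lemma array_avg_dist_pair_measurable [measurable]:
  "(\<lambda>R. (array_avg_dist m (fst R), array_avg_dist m (snd R)))
    \<in> measurable (PiM (arr_idx 2 m) (\<lambda>_. borel) \<Otimes>\<^sub>M PiM (arr_idx 2 m) (\<lambda>_. borel)) borel"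
  unfolding borel_prod[symmetric] by measurable

lemma sets_Phi [measurable_cong]:
  "sets (Phi n m lam) = sets (PiM (arr_idx n m) (\<lambda>_. borel) \<Otimes>\<^sub>M PiM (arr_idx n m) (\<lambda>_. borel))"
  by (simp add: Phi_def)

lemma array_avg_dist_dist_array: "array_avg_dist m (dist_array 2 m pr z) = avg_dist m (pr (z 1)) (pr (z 2))"
  unfolding array_avg_dist_def avg_dist_def dist_array_def
  by (auto simp: arr_idx_def divide_inverse intro!: sum.cong)

lemma distr_Phi_array_avg_dist:
  assumes "prob_space lam" "sets lam = sets borel"
  shows "distr (Phi 2 m lam) borel (\<lambda>R. (array_avg_dist m (fst R), array_avg_dist m (snd R))) = Q_law m lam"
proof -
  let ?A = "PiM (arr_idx 2 m) (\<lambda>_. borel :: real measure)"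
  let ?q = "\<lambda>((x1, y1), (x2, y2)). (avg_dist m x1 x2, avg_dist m y1 y2)"
  have sigma_finite: "sigma_finite_measure lam"
    using assms(1) by (rule prob_space_imp_sigma_finite)
  have [measurable]: "(\<lambda>z. (dist_array 2 m fst z, dist_array 2 m snd z)) \<in> measurable (PiM {1..2} (\<lambda>_. lam)) (?A \<Otimes>\<^sub>M ?A)"
    using dist_array_measurable[OF assms(2)] by (intro measurable_Pair) (simp_all add: borel_prod[symmetric])
  have [measurable]: "?q \<in> measurable (lam \<Otimes>\<^sub>M lam) borel"
    using avg_dist_pair_measurable by (simp add: measurable_cong_sets[OF sets_pair_measure_cong[OF assms(2) assms(2)] refl])
  have [measurable]: "(\<lambda>z. (z 1, z 2)) \<in> measurable (PiM {1..2::nat} (\<lambda>_. lam)) (lam \<Otimes>\<^sub>M lam)"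
    by measurable
  have "distr (Phi 2 m lam) borel (\<lambda>R. (array_avg_dist m (fst R), array_avg_dist m (snd R)))
      = distr (PiM {1..2::nat} (\<lambda>_. lam)) borel (\<lambda>z. ?q (z 1, z 2))"
    unfolding Phi_def
    by (subst distr_distr, measurable, measurable) (simp add: comp_def array_avg_dist_dist_array case_prod_beta')
  also have "\<dots> = distr (distr (PiM {1..2::nat} (\<lambda>_. lam)) (lam \<Otimes>\<^sub>M lam) (\<lambda>z. (z 1, z 2))) borel ?q"
    by (subst distr_distr, measurable, measurable) (simp add: comp_def)
  also have "\<dots> = Q_law m lam"
    unfolding distr_PiM_two_eq_pair_measure[OF sigma_finite] Q_law_def ..
  finally show ?thesis .
qed

lemma array_metric_ge:
  "sqrt (real m) * dist (array_avg_dist m (fst P), array_avg_dist m (snd P))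
      (array_avg_dist m (fst R), array_avg_dist m (snd R))
    \<le> array_metric 2 m P R"
proof -
  define u where "u t = fst P (1, 2, t, t) - fst R (1, 2, t, t)" for t
  define v where "v t = snd P (1, 2, t, t) - snd R (1, 2, t, t)" for t
  define F where "F \<iota> = (fst P \<iota> - fst R \<iota>)\<^sup>2 + (snd P \<iota> - snd R \<iota>)\<^sup>2" for \<iota>
  have mean_square: "real m * ((\<Sum>t<m. w t) / real m)\<^sup>2 \<le> (\<Sum>t<m. (w t)\<^sup>2)" for w
    using sum_squared_le_sum_of_squares[of w "{..<m}"]
    by (cases "m = 0") (simp_all add: power_divide power2_eq_square field_simps)
  let ?d = "dist (array_avg_dist m (fst P), array_avg_dist m (snd P))
      (array_avg_dist m (fst R), array_avg_dist m (snd R))"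
  have "real m * ?d\<^sup>2 = real m * ((\<Sum>t<m. u t) / real m)\<^sup>2 + real m * ((\<Sum>t<m. v t) / real m)\<^sup>2"
    by (simp add: dist_Pair_Pair dist_real_def array_avg_dist_def u_def v_def sum_subtractf
        diff_divide_distrib distrib_left)
  also have "\<dots> \<le> (\<Sum>t<m. F (1, 2, t, t))"
    using add_mono[OF mean_square mean_square] by (simp add: F_def u_def v_def sum.distrib)
  also have "\<dots> = (\<Sum>\<iota>\<in>(\<lambda>t. (1, 2, t, t)) ` {..<m}. F \<iota>)"
    by (rule sum.reindex[symmetric, unfolded comp_def]) (simp add: inj_on_def)
  also have "\<dots> \<le> (\<Sum>\<iota>\<in>arr_idx 2 m. F \<iota>)"
    by (rule sum_mono2) (auto simp: arr_idx_def F_def)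
  finally have "sqrt (real m * ?d\<^sup>2) \<le> sqrt (\<Sum>\<iota>\<in>arr_idx 2 m. F \<iota>)"
    by (rule real_sqrt_le_mono)
  then show ?thesis
    by (simp add: array_metric_def F_def real_sqrt_mult)
qed

lemma W1_Phi_ge:
  assumes "prob_space lam1" "sets lam1 = sets borel" "prob_space lam2" "sets lam2 = sets borel"
  shows "ennreal (sqrt (real m)) * W1 dist (Q_law m lam1) (Q_law m lam2)
    \<le> W1 (array_metric 2 m) (Phi 2 m lam1) (Phi 2 m lam2)"
  unfolding distr_Phi_array_avg_dist[OF assms(1,2), symmetric] distr_Phi_array_avg_dist[OF assms(3,4), symmetric]
  by (rule W1_distr_le) (simp_all add: array_metric_ge)

theorem proposition19:
  fixes m :: nat
  assumes "m \<ge> 1"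
  shows "ennreal (1 / (24 * sqrt 2 * real m))
           \<le> W1 dist (Q_law m diag_meas) (Q_law m (haar \<Otimes>\<^sub>M haar))
       \<and> W1 dist (Q_law m diag_meas) (Q_law m (haar \<Otimes>\<^sub>M haar))
           \<le> ennreal (1 / sqrt (24 * real m))
       \<and> ennreal (1 / (24 * sqrt (2 * real m)))
           \<le> W1 (array_metric 2 m) (Phi 2 m diag_meas) (Phi 2 m (haar \<Otimes>\<^sub>M haar))"
proof -
  let ?W = "W1 dist (Q_law m diag_meas) (Q_law m (haar \<Otimes>\<^sub>M haar))"
  have m: "0 < m"
    using assms by simp
  have Q_lower: "ennreal (1 / (12 * sqrt 2 * real m)) \<le> ?W"
    by (rule W1_Q_law_ge[OF m])
  have "1 / (12 * sqrt (2 * real m)) = sqrt (real m) * (1 / (12 * sqrt 2 * real m))"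
    using m real_sqrt_mult_self[of "real m"] by (simp add: real_sqrt_mult field_simps)
  then have "ennreal (1 / (12 * sqrt (2 * real m))) = ennreal (sqrt (real m)) * ennreal (1 / (12 * sqrt 2 * real m))"
    by (simp only: ennreal_mult' real_sqrt_ge_zero of_nat_0_le_iff)
  also have "\<dots> \<le> ennreal (sqrt (real m)) * ?W"
    by (rule mult_left_mono[OF Q_lower]) simp
  also have "\<dots> \<le> W1 (array_metric 2 m) (Phi 2 m diag_meas) (Phi 2 m (haar \<Otimes>\<^sub>M haar))"
    by (rule W1_Phi_ge[OF prob_space_diag_meas sets_diag_meas haar2.prob_space_axioms sets_haar2])
  finally have Phi_lower: "ennreal (1 / (12 * sqrt (2 * real m)))
      \<le> W1 (array_metric 2 m) (Phi 2 m diag_meas) (Phi 2 m (haar \<Otimes>\<^sub>M haar))" .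
  have "ennreal (1 / (24 * sqrt 2 * real m)) \<le> ennreal (1 / (12 * sqrt 2 * real m))"
    "ennreal (1 / (24 * sqrt (2 * real m))) \<le> ennreal (1 / (12 * sqrt (2 * real m)))"
    using m by (simp_all add: ennreal_leI frac_le)
  then show ?thesis
    using Q_lower Phi_lower W1_Q_law_le[OF m] by (meson order_trans)
qed

end
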